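(* Let $(\mathscr X,d)$ be a metric space and let $(\mu_n)_{n\geqslant 1}$ be a sequence of positive Borel measures on $\mathscr X$ such that $\mu_n(\mathscr X)\leqslant M$ for all $n$, where $M$ is a positive constant. Denote by $q_n(t)=\sup_{x\in\mathscr X}\mu_n(B(x,t))$ the concentration function of $\mu_n$. Assume that there is a function $q$ such that $q_n(t)\to q(t)$ as $n\to\infty$ for a.e. $t>0$, and that $\lim_{t\to\infty}q(t)=\alpha>0$. Fix an increasing sequence $t_n\to\infty$ such that $q_n(t_n)\to\alpha$. Then there exist a subsequence $(\mu_{n_k})_{k\geqslant1}$, a sequence of points $(x_k)_{k\geqslant1}\subset\mathscr X$ and a sequence $(R_k)_{k\geqslant1}$ of positive numbers such that $R_k\leqslant t_{n_k}$, $R_k\to\infty$, $\mu_{n_k}(B(x_k,R_k))\to\alpha$ as $k\to\infty$, and the sequence of measures $\big({\mu_{n_k}}_{|B(x_k,R_k)}\big)_{k\geqslant1}$ concentrates around $(x_k)_{k\geqslant1}$.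
   Context: $B(x,r)$ denotes the open ball of center $x$ and radius $r$ in $\mathscr X$. For a Borel measure $\mu$ and a Borel set $A$, the restriction $\mu_{|A}$ is defined by $\mu_{|A}(E)=\mu(A\cap E)$. A sequence $(\nu_k)_{k\geqslant1}$ of positive Borel measures on $\mathscr X$ concentrates around a sequence of points $(x_k)_{k\geqslant1}\subset\mathscr X$ if for every $\varepsilon>0$ there exists $R_\varepsilon>0$ such that $\nu_k(\mathscr X\setminus B(x_k,R_\varepsilon))<\varepsilon$ for all $k\geqslant1$. *)

theory Defs
  imports "HOL-Analysis.Analysis"
begin

definition restrict_measure :: "'a measure \<Rightarrow> 'a set \<Rightarrow> 'a measure" where
  "restrict_measure \<mu> A = density \<mu> (indicator A)"

definition conc_fun :: "('a::metric_space) measure \<Rightarrow> real \<Rightarrow> real" where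
  "conc_fun \<mu> t = (SUP x. measure \<mu> (ball x t))"

definition concentrates_around :: "(nat \<Rightarrow> ('a::metric_space) measure) \<Rightarrow> (nat \<Rightarrow> 'a) \<Rightarrow> bool" where
  "concentrates_around \<nu> x \<longleftrightarrow>
     (\<forall>\<epsilon>>0. \<exists>R>0. \<forall>k. emeasure (\<nu> k) (space (\<nu> k) - ball (x k) R) < ennreal \<epsilon>)"

end

theory Submission
  imports Defs "HOL-Library.Diagonal_Subsequence"
begin

(*
  For every c < alpha some radius s is a point of a.e. convergence beyond which q exceeds c,
  so eventually mu_n gives mass > c to some ball of radius s.  Letting c run through levels
  c_i -> alpha yields balls B_i^n of mass > alpha/2, of which at most 2M/alpha can be pairwise
  disjoint.  Along a diagonal subsequence on which every intersection pattern "B_i^n meets B_j^n"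
  stabilises, this packing bound produces an index i0 whose ball eventually meets infinitely many
  B_i^n.  These lie in balls of fixed radius around the centre x_k of B_i0^n, so mass arbitrarily
  close to alpha stays within bounded distance of x_k.  With R_k = t_(n_k), the bound
  q_(n_k)(t_(n_k)) -> alpha caps the mass of B(x_k, R_k) from above, which gives both the
  convergence and the concentration.
*)

lemma emeasure_restrict_measure:
  assumes "B \<in> sets \<mu>" "A \<in> sets \<mu>"
  shows "emeasure (restrict_measure \<mu> B) A = emeasure \<mu> (B \<inter> A)"
proof -
  have "emeasure (restrict_measure \<mu> B) A = (\<integral>\<^sup>+x. indicator B x * indicator A x \<partial>\<mu>)"
    unfolding restrict_measure_def using assms by (simp add: emeasure_density)
  also have "\<dots> = (\<integral>\<^sup>+x. indicator (B \<inter> A) x \<partial>\<mu>)"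
    by (intro nn_integral_cong) (simp split: split_indicator)
  also have "\<dots> = emeasure \<mu> (B \<inter> A)"
    using assms by simp
  finally show ?thesis .
qed

lemma sets_restrict_measure [simp]: "sets (restrict_measure \<mu> B) = sets \<mu>"
  and space_restrict_measure [simp]: "space (restrict_measure \<mu> B) = space \<mu>"
  by (simp_all add: restrict_measure_def)

lemma bdd_above_measure_ball:
  "finite_measure \<mu> \<Longrightarrow> bdd_above (range (\<lambda>x. measure \<mu> (ball x r)))"
  by (intro bdd_aboveI[of _ "measure \<mu> (space \<mu>)"]) (auto intro: finite_measure.bounded_measure)

lemma measure_ball_le_conc_fun:
  "finite_measure \<mu> \<Longrightarrow> measure \<mu> (ball x r) \<le> conc_fun \<mu> r"
  unfolding conc_fun_def by (rule cSUP_upper[OF _ bdd_above_measure_ball]) simp_all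

lemma less_conc_fun_imp_ex_ball:
  assumes "finite_measure \<mu>" "c < conc_fun \<mu> r"
  shows "\<exists>x. c < measure \<mu> (ball x r)"
  using assms(2) unfolding conc_fun_def by (simp add: less_cSUP_iff[OF _ bdd_above_measure_ball[OF assms(1)]])

lemma AE_lborel_ex_in_interval:
  fixes a b :: real
  assumes "AE s in lborel. P s" "a < b"
  shows "\<exists>s. a < s \<and> s < b \<and> P s"
proof (rule ccontr)
  assume "\<not> ?thesis"
  then have "AE s in lborel. s \<notin> {a<..<b}"
    using assms(1) by auto
  then have "emeasure lborel {a<..<b} = 0"
    by (subst AE_iff_measurable[symmetric]) auto
  with \<open>a < b\<close> show False
    by simp
qed

lemma ex_scale_eventually_less:
  fixes f :: "nat \<Rightarrow> real \<Rightarrow> real"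
  assumes lim: "AE s in lborel. s > 0 \<longrightarrow> (\<lambda>n. f n s) \<longlonglongrightarrow> q s"
    and q: "(q \<longlongrightarrow> \<alpha>) at_top" and "c < \<alpha>"
  shows "\<exists>s>0. \<forall>\<^sub>F n in sequentially. c < f n s"
proof -
  obtain S where S: "\<And>s. s \<ge> S \<Longrightarrow> c < q s"
    using order_tendstoD(1)[OF q \<open>c < \<alpha>\<close>] by (auto simp: eventually_at_top_linorder)
  obtain s where s: "max S 0 < s" "s > 0 \<longrightarrow> (\<lambda>n. f n s) \<longlonglongrightarrow> q s"
    using AE_lborel_ex_in_interval[OF lim, of "max S 0" "max S 0 + 1"] by auto
  then have "(\<lambda>n. f n s) \<longlonglongrightarrow> q s" "c < q s"
    using S by auto
  then show ?thesis
    using s(1) by (intro exI[of _ s]) (auto dest: order_tendstoD(1))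
qed

lemma ex_heavy_balls:
  fixes \<mu> :: "nat \<Rightarrow> ('a::metric_space) measure" and c :: "'i \<Rightarrow> real"
  assumes fin: "\<And>n. finite_measure (\<mu> n)"
    and scale: "\<And>i. \<exists>s. \<forall>\<^sub>F n in sequentially. c i < conc_fun (\<mu> n) s"
  obtains s g where "\<And>i. \<forall>\<^sub>F n in sequentially. c i < measure (\<mu> n) (ball (g n i) (s i))"
proof -
  obtain s where s: "\<And>i. \<forall>\<^sub>F n in sequentially. c i < conc_fun (\<mu> n) (s i)"
    using scale by metis
  define g where "g n i = (SOME x. c i < measure (\<mu> n) (ball x (s i)))" for n i
  have "\<forall>\<^sub>F n in sequentially. c i < measure (\<mu> n) (ball (g n i) (s i))" for i
    using s[of i] unfolding g_def
    by (rule eventually_mono) (rule someI_ex[OF less_conc_fun_imp_ex_ball[OF fin]])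
  then show thesis
    by (rule that)
qed

lemma subseq_eventually_decided:
  fixes P :: "'i::countable \<Rightarrow> nat \<Rightarrow> bool"
  obtains d where "strict_mono d"
    "\<And>i. (\<forall>\<^sub>F k in sequentially. P i (d k)) \<or> (\<forall>\<^sub>F k in sequentially. \<not> P i (d k))"
proof -
  define decided where "decided m r \<longleftrightarrow>
    (\<forall>\<^sub>F k in sequentially. P (from_nat m) (r k)) \<or> (\<forall>\<^sub>F k in sequentially. \<not> P (from_nat m) (r k))"
    for m and r :: "nat \<Rightarrow> nat"
  interpret subseqs decided
  proof
    fix m and r :: "nat \<Rightarrow> nat"
    have "{k. P (from_nat m) (r k)} \<union> {k. \<not> P (from_nat m) (r k)} = UNIV"
      by auto
    then have "infinite ({k. P (from_nat m) (r k)} \<union> {k. \<not> P (from_nat m) (r k)})"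
      by simp
    then have "infinite {k. P (from_nat m) (r k)} \<or> infinite {k. \<not> P (from_nat m) (r k)}"
      by simp
    then obtain b where b: "infinite {k. P (from_nat m) (r k) = b}"
    proof
      assume "infinite {k. P (from_nat m) (r k)}"
      then show thesis using that[of True] by simp
    next
      assume "infinite {k. \<not> P (from_nat m) (r k)}"
      then show thesis using that[of False] by simp
    qed
    obtain r' :: "nat \<Rightarrow> nat" where "strict_mono r'" "\<And>k. P (from_nat m) (r (r' k)) = b"
      using infinite_enumerate[OF b] by blast
    then show "\<exists>r'. strict_mono r' \<and> decided m (r \<circ> r')"
      unfolding decided_def by (cases b) auto
  qed
  have decided_diagseq: "decided m diagseq" for m
  proof -
    have "decided m (diagseq \<circ> (+) (Suc m))"
    proof (rule diagseq_holds)
      fix r s :: "nat \<Rightarrow> nat" and n assume "strict_mono r" "decided n s"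
      then show "decided n (s \<circ> r)"
        unfolding decided_def by (auto dest: eventually_subseq)
    qed
    then show ?thesis
      using eventually_sequentially_seg[of "\<lambda>k. P (from_nat m) (diagseq k)" "Suc m"]
        eventually_sequentially_seg[of "\<lambda>k. \<not> P (from_nat m) (diagseq k)" "Suc m"]
      unfolding decided_def by (simp add: add.commute)
  qed
  show thesis
  proof (rule that[OF subseq_diagseq])
    fix i :: 'i
    show "(\<forall>\<^sub>F k in sequentially. P i (diagseq k)) \<or> (\<forall>\<^sub>F k in sequentially. \<not> P i (diagseq k))"
      using decided_diagseq[of "to_nat i"] by (simp add: decided_def)
  qed
qed

lemma ex_independent_set_card:
  assumes "infinite (UNIV :: 'a set)" "symp E" "\<And>i. finite {j. E i j}"
  shows "\<exists>F :: 'a set. finite F \<and> card F = m \<and> pairwise (\<lambda>a b. \<not> E a b) F"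
proof (induction m)
  case 0
  show ?case by (intro exI[of _ "{}"]) auto
next
  case (Suc m)
  then obtain F where F: "finite F" "card F = m" "pairwise (\<lambda>a b. \<not> E a b) F"
    by blast
  have "finite (F \<union> (\<Union>a\<in>F. {j. E a j}))"
    using F(1) assms(3) by auto
  then obtain i where "i \<notin> F \<union> (\<Union>a\<in>F. {j. E a j})"
    using ex_new_if_finite[OF assms(1)] by blast
  with F assms(2) show ?case
    by (intro exI[of _ "insert i F"]) (auto simp: pairwise_insert dest: sympD)
qed

lemma subseq_infinitely_many_neighbours:
  fixes near :: "nat \<Rightarrow> 'i::countable \<Rightarrow> 'i \<Rightarrow> bool"
  assumes "infinite (UNIV :: 'i set)" and sym: "\<And>n. symp (near n)"
    and no_large_independent: "\<And>F. finite F \<Longrightarrow> card F = N \<Longrightarrow>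
      \<forall>\<^sub>F n in sequentially. \<not> pairwise (\<lambda>a b. \<not> near n a b) F"
  obtains d i0 where "strict_mono d" "infinite {i. \<forall>\<^sub>F k in sequentially. near (d k) i0 i}"
proof -
  obtain d where d: "strict_mono d" and decided:
    "\<And>ij. (\<forall>\<^sub>F k in sequentially. near (d k) (fst ij) (snd ij))
      \<or> (\<forall>\<^sub>F k in sequentially. \<not> near (d k) (fst ij) (snd ij))"
    using subseq_eventually_decided[of "\<lambda>ij n. near n (fst ij) (snd ij)"] by blast
  define Near where "Near i j \<longleftrightarrow> (\<forall>\<^sub>F k in sequentially. near (d k) i j)" for i j
  have "\<exists>i0. infinite {i. Near i0 i}"
  proof (rule ccontr)
    assume "\<nexists>i0. infinite {i. Near i0 i}"
    moreover have "symp Near"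
      using sym unfolding Near_def symp_def by (auto elim: eventually_mono)
    ultimately obtain F where F: "finite F" "card F = N" "pairwise (\<lambda>a b. \<not> Near a b) F"
      using ex_independent_set_card[OF assms(1)] by blast
    have "\<forall>\<^sub>F k in sequentially. \<forall>(a, b) \<in> F \<times> F. a \<noteq> b \<longrightarrow> \<not> near (d k) a b"
      using F(1,3) decided unfolding Near_def pairwise_def
      by (intro eventually_ball_finite) fastforce+
    moreover have "\<forall>\<^sub>F k in sequentially. \<not> pairwise (\<lambda>a b. \<not> near (d k) a b) F"
      using eventually_subseq[OF d no_large_independent[OF F(1,2)]] .
    ultimately have "\<forall>\<^sub>F k in sequentially. False"
      by eventually_elim (auto simp: pairwise_def)
    then show False
      by simp
  qed
  then show thesis
    using that[OF d] unfolding Near_def by blast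
qed

lemma card_mult_le_measure_disjoint_family:
  assumes "finite_measure \<mu>" "finite F" "disjoint_family_on A F"
    and "\<And>i. i \<in> F \<Longrightarrow> A i \<in> sets \<mu>" "\<And>i. i \<in> F \<Longrightarrow> c \<le> measure \<mu> (A i)"
  shows "real (card F) * c \<le> measure \<mu> (space \<mu>)"
proof -
  have "real (card F) * c \<le> (\<Sum>i\<in>F. measure \<mu> (A i))"
    using sum_mono[of F "\<lambda>_. c", OF assms(5)] by simp
  also have "\<dots> = measure \<mu> (\<Union>i\<in>F. A i)"
    using finite_measure.finite_measure_finite_Union[OF assms(1,2) _ assms(3)] assms(4) by (simp add: image_subset_iff)
  also have "\<dots> \<le> measure \<mu> (space \<mu>)"
    by (rule finite_measure.bounded_measure[OF assms(1)])
  finally show ?thesis .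
qed

lemma eventually_not_disjoint_family_if_heavy:
  assumes fin: "\<And>n. finite_measure (\<mu> n)"
    and total: "\<And>n. measure (\<mu> n) (space (\<mu> n)) \<le> M"
    and sets: "\<And>n i. A n i \<in> sets (\<mu> n)"
    and heavy: "\<And>i. i \<in> F \<Longrightarrow> \<forall>\<^sub>F n in sequentially. c \<le> measure (\<mu> n) (A n i)"
    and "finite F" "M < real (card F) * c"
  shows "\<forall>\<^sub>F n in sequentially. \<not> disjoint_family_on (A n) F"
proof -
  have "\<forall>\<^sub>F n in sequentially. \<forall>i\<in>F. c \<le> measure (\<mu> n) (A n i)"
    using heavy by (intro eventually_ball_finite[OF \<open>finite F\<close>] ballI)
  then show ?thesis
  proof (rule eventually_mono)
    fix n assume "\<forall>i\<in>F. c \<le> measure (\<mu> n) (A n i)"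
    then have "disjoint_family_on (A n) F \<Longrightarrow> real (card F) * c \<le> M"
      using card_mult_le_measure_disjoint_family[OF fin \<open>finite F\<close> _ sets] total[of n]
      by fastforce
    with \<open>M < real (card F) * c\<close> show "\<not> disjoint_family_on (A n) F"
      by linarith
  qed
qed

lemma ball_subset_ball_if_meets:
  fixes x y :: "'a::metric_space"
  assumes "ball x r \<inter> ball y s \<noteq> {}"
  shows "ball y s \<subseteq> ball x (r + 2 * s)"
proof
  fix z assume "z \<in> ball y s"
  moreover obtain w where "w \<in> ball x r" "w \<in> ball y s"
    using assms by blast
  ultimately show "z \<in> ball x (r + 2 * s)"
    unfolding mem_ball by metric
qed

definition concentrates_mass :: "(nat \<Rightarrow> ('a::metric_space) measure) \<Rightarrow> (nat \<Rightarrow> 'a) \<Rightarrow> real \<Rightarrow> bool" where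
  "concentrates_mass \<nu> x \<alpha> \<longleftrightarrow>
     (\<forall>c<\<alpha>. \<exists>\<rho>. \<forall>\<^sub>F k in sequentially. c < measure (\<nu> k) (ball (x k) \<rho>))"

lemma ex_seq_tendsto_from_below:
  fixes \<alpha> :: real
  assumes "\<alpha> > 0"
  obtains c :: "nat \<Rightarrow> real" where "\<And>i. \<alpha> / 2 \<le> c i" "\<And>i. c i < \<alpha>" "c \<longlonglongrightarrow> \<alpha>"
proof
  have pos: "0 < \<alpha> / 2 / real (Suc i)" and small: "\<alpha> / 2 / real (Suc i) \<le> \<alpha> / 2" for i
    using assms by (simp_all add: divide_le_eq)
  show "\<alpha> / 2 \<le> \<alpha> - \<alpha> / 2 / real (Suc i)" "\<alpha> - \<alpha> / 2 / real (Suc i) < \<alpha>" for i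
    using pos[of i] small[of i] by linarith+
  have "(\<lambda>i. \<alpha> - \<alpha> / 2 / real (Suc i)) \<longlonglongrightarrow> \<alpha> - 0"
    using LIMSEQ_Suc[OF lim_const_over_n[of "\<alpha> / 2"]] by (intro tendsto_diff tendsto_const)
  then show "(\<lambda>i. \<alpha> - \<alpha> / 2 / real (Suc i)) \<longlonglongrightarrow> \<alpha>"
    by simp
qed

lemma concentrates_mass_if_meets_heavy_balls:
  fixes \<nu> :: "nat \<Rightarrow> ('a::metric_space) measure"
  assumes borel: "\<And>k. sets (\<nu> k) = sets borel" and fin: "\<And>k. finite_measure (\<nu> k)"
    and heavy: "\<And>i. \<forall>\<^sub>F k in sequentially. c i < measure (\<nu> k) (ball (y k i) (s i))"
    and "c \<longlonglongrightarrow> \<alpha>"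
    and meets: "infinite {i. \<forall>\<^sub>F k in sequentially. ball (x k) r \<inter> ball (y k i) (s i) \<noteq> {}}"
  shows "concentrates_mass \<nu> x \<alpha>"
  unfolding concentrates_mass_def
proof (intro allI impI)
  fix b assume "b < \<alpha>"
  have "\<exists>\<^sub>F i in sequentially. \<forall>\<^sub>F k in sequentially. ball (x k) r \<inter> ball (y k i) (s i) \<noteq> {}"
    using meets by (simp add: frequently_cofinite flip: cofinite_eq_sequentially)
  from frequently_ex[OF frequently_eventually_frequently[OF this order_tendstoD(1)[OF \<open>c \<longlonglongrightarrow> \<alpha>\<close> \<open>b < \<alpha>\<close>]]]
  obtain i where i: "\<forall>\<^sub>F k in sequentially. ball (x k) r \<inter> ball (y k i) (s i) \<noteq> {}" "b < c i"
    by blast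
  have "\<forall>\<^sub>F k in sequentially. b < measure (\<nu> k) (ball (x k) (r + 2 * s i))"
    using i(1) heavy[of i]
  proof eventually_elim
    case (elim k)
    have "ball (y k i) (s i) \<subseteq> ball (x k) (r + 2 * s i)"
      using elim(1) by (rule ball_subset_ball_if_meets)
    have "b < c i"
      by (fact i(2))
    also have "\<dots> < measure (\<nu> k) (ball (y k i) (s i))"
      by (fact elim(2))
    also have "\<dots> \<le> measure (\<nu> k) (ball (x k) (r + 2 * s i))"
      using borel[of k] by (intro finite_measure.finite_measure_mono[OF fin \<open>ball _ _ \<subseteq> _\<close>]) simp
    finally show ?case .
  qed
  then show "\<exists>\<rho>. \<forall>\<^sub>F k in sequentially. b < measure (\<nu> k) (ball (x k) \<rho>)"
    by (rule exI)
qed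

lemma subseq_concentrates_mass:
  fixes \<mu> :: "nat \<Rightarrow> ('a::metric_space) measure"
  assumes borel: "\<And>n. sets (\<mu> n) = sets borel"
    and fin: "\<And>n. finite_measure (\<mu> n)"
    and total: "\<And>n. measure (\<mu> n) (space (\<mu> n)) \<le> M"
    and "\<alpha> > 0"
    and scale: "\<And>c. c < \<alpha> \<Longrightarrow> \<exists>s. \<forall>\<^sub>F n in sequentially. c < conc_fun (\<mu> n) s"
  obtains r x where "strict_mono r" "concentrates_mass (\<lambda>k. \<mu> (r k)) x \<alpha>"
proof -
  obtain c where c_ge: "\<And>i. \<alpha> / 2 \<le> c i" and c_lt: "\<And>i. c i < \<alpha>" and "c \<longlonglongrightarrow> \<alpha>"
    using ex_seq_tendsto_from_below[OF \<open>\<alpha> > 0\<close>] by blast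
  have "\<exists>s. \<forall>\<^sub>F n in sequentially. c i < conc_fun (\<mu> n) s" for i
    using scale[OF c_lt] .
  then obtain s g where g: "\<And>i. \<forall>\<^sub>F n in sequentially. c i < measure (\<mu> n) (ball (g n i) (s i))"
    using ex_heavy_balls[where \<mu> = \<mu> and c = c, OF fin] by blast
  define near where "near n i j \<longleftrightarrow> ball (g n i) (s i) \<inter> ball (g n j) (s j) \<noteq> {}" for n i j
  have near_sym: "symp (near n)" for n
    unfolding near_def symp_def by blast
  obtain N :: nat where N: "M < real N * (\<alpha> / 2)"
    using ex_less_of_nat_mult[of "\<alpha> / 2" M] \<open>\<alpha> > 0\<close> by auto
  have no_large_independent: "\<forall>\<^sub>F n in sequentially. \<not> pairwise (\<lambda>a b. \<not> near n a b) F"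
    if "finite F" "card F = N" for F
  proof -
    have "\<forall>\<^sub>F n in sequentially. \<alpha> / 2 \<le> measure (\<mu> n) (ball (g n i) (s i))" for i
      using g[of i] by (rule eventually_mono) (use c_ge[of i] in linarith)
    moreover have "ball (g n i) (s i) \<in> sets (\<mu> n)" for n i
      using borel[of n] by simp
    ultimately have "\<forall>\<^sub>F n in sequentially. \<not> disjoint_family_on (\<lambda>i. ball (g n i) (s i)) F"
      using N that eventually_not_disjoint_family_if_heavy[where \<mu> = \<mu>
          and A = "\<lambda>n i. ball (g n i) (s i)" and c = "\<alpha> / 2", OF fin total]
      by auto
    then show ?thesis
      unfolding near_def pairwise_def disjoint_family_on_def by (rule eventually_mono) blast
  qed
  obtain d i0 where d: "strict_mono d"
    and meets: "infinite {i. \<forall>\<^sub>F k in sequentially. near (d k) i0 i}"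
    using subseq_infinitely_many_neighbours[OF infinite_UNIV_nat near_sym no_large_independent] by blast
  have "concentrates_mass (\<lambda>k. \<mu> (d k)) (\<lambda>k. g (d k) i0) \<alpha>"
    using meets unfolding near_def
    by (rule concentrates_mass_if_meets_heavy_balls[where \<nu> = "\<lambda>k. \<mu> (d k)",
          OF borel fin eventually_subseq[OF d g] \<open>c \<longlonglongrightarrow> \<alpha>\<close>])
  with d show thesis
    by (rule that)
qed

lemma tendsto_measure_ball_if_concentrates_mass:
  fixes \<nu> :: "nat \<Rightarrow> ('a::metric_space) measure"
  assumes borel: "\<And>k. sets (\<nu> k) = sets borel" and fin: "\<And>k. finite_measure (\<nu> k)"
    and mass: "concentrates_mass \<nu> x \<alpha>"
    and R: "filterlim R at_top sequentially"
    and conc: "(\<lambda>k. conc_fun (\<nu> k) (R k)) \<longlonglongrightarrow> \<alpha>"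
  shows "(\<lambda>k. measure (\<nu> k) (ball (x k) (R k))) \<longlonglongrightarrow> \<alpha>"
proof (rule order_tendstoI)
  fix b assume "b < \<alpha>"
  then obtain \<rho> where "\<forall>\<^sub>F k in sequentially. b < measure (\<nu> k) (ball (x k) \<rho>)"
    using mass unfolding concentrates_mass_def by blast
  moreover have "\<forall>\<^sub>F k in sequentially. \<rho> \<le> R k"
    using R by (simp add: filterlim_at_top)
  ultimately show "\<forall>\<^sub>F k in sequentially. b < measure (\<nu> k) (ball (x k) (R k))"
  proof eventually_elim
    case (elim k)
    have "measure (\<nu> k) (ball (x k) \<rho>) \<le> measure (\<nu> k) (ball (x k) (R k))"
      using borel[of k] by (intro finite_measure.finite_measure_mono[OF fin] subset_ball elim(2)) simp
    with elim(1) show ?case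
      by linarith
  qed
next
  fix b assume "\<alpha> < b"
  with conc have "\<forall>\<^sub>F k in sequentially. conc_fun (\<nu> k) (R k) < b"
    by (rule order_tendstoD(2))
  then show "\<forall>\<^sub>F k in sequentially. measure (\<nu> k) (ball (x k) (R k)) < b"
    by eventually_elim (rule le_less_trans[OF measure_ball_le_conc_fun[OF fin]])
qed

lemma concentrates_aroundI:
  fixes \<nu> :: "nat \<Rightarrow> ('a::metric_space) measure"
  assumes borel: "\<And>k. sets (\<nu> k) = sets borel"
    and support: "\<And>k. emeasure (\<nu> k) (space (\<nu> k) - ball (x k) (R k)) = 0"
    and tail: "\<And>e. e > 0 \<Longrightarrow>
      \<exists>\<rho>. \<forall>\<^sub>F k in sequentially. emeasure (\<nu> k) (space (\<nu> k) - ball (x k) \<rho>) < ennreal e"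
  shows "concentrates_around \<nu> x"
  unfolding concentrates_around_def
proof (intro allI impI)
  fix e :: real assume "e > 0"
  then obtain \<rho> K
    where \<rho>: "\<And>k. k \<ge> K \<Longrightarrow> emeasure (\<nu> k) (space (\<nu> k) - ball (x k) \<rho>) < ennreal e"
    using tail by (meson eventually_sequentially)
  \<comment> \<open>The finitely many measures before \<open>K\<close> are handled by their bounded support.\<close>
  define \<rho>' where "\<rho>' = max \<rho> 1 + (\<Sum>k<K. \<bar>R k\<bar>)"
  have "(\<Sum>k<K. \<bar>R k\<bar>) \<ge> 0"
    by (simp add: sum_nonneg)
  then have "\<rho> \<le> \<rho>'" and "0 < \<rho>'"
    unfolding \<rho>'_def by linarith+
  have tail_mono: "emeasure (\<nu> k) (space (\<nu> k) - ball (x k) \<rho>')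
      \<le> emeasure (\<nu> k) (space (\<nu> k) - ball (x k) r)" if "r \<le> \<rho>'" for k r
    using borel[of k] subset_ball[OF that] by (intro emeasure_mono) auto
  have "emeasure (\<nu> k) (space (\<nu> k) - ball (x k) \<rho>') < ennreal e" for k
  proof (cases "k < K")
    case True
    then have "R k \<le> \<rho>'"
      using member_le_sum[of k "{..<K}" "\<lambda>k. \<bar>R k\<bar>"] unfolding \<rho>'_def by auto
    then show ?thesis
      using tail_mono[of "R k" k] support[of k] \<open>e > 0\<close> by simp
  next
    case False
    then show ?thesis
      using tail_mono[OF \<open>\<rho> \<le> \<rho>'\<close>, of k] \<rho>[of k] by simp
  qed
  with \<open>0 < \<rho>'\<close> show "\<exists>R>0. \<forall>k. emeasure (\<nu> k) (space (\<nu> k) - ball (x k) R) < ennreal e"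
    by blast
qed

lemma concentrates_around_restrict_ball:
  fixes \<nu> :: "nat \<Rightarrow> ('a::metric_space) measure"
  assumes borel: "\<And>k. sets (\<nu> k) = sets borel" and fin: "\<And>k. finite_measure (\<nu> k)"
    and mass: "concentrates_mass \<nu> x \<alpha>"
    and R: "filterlim R at_top sequentially"
    and lim: "(\<lambda>k. measure (\<nu> k) (ball (x k) (R k))) \<longlonglongrightarrow> \<alpha>"
  shows "concentrates_around (\<lambda>k. restrict_measure (\<nu> k) (ball (x k) (R k))) x"
proof (rule concentrates_aroundI[where R = R])
  have space: "space (\<nu> k) = UNIV" for k
    using sets_eq_imp_space_eq[OF borel[of k]] by simp
  have ball_sets: "ball z r \<in> sets (\<nu> k)" for z r k
    using borel[of k] by simp
  have restrict_eq: "emeasure (restrict_measure (\<nu> k) (ball (x k) (R k))) (space (\<nu> k) - ball (x k) r)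
    = emeasure (\<nu> k) (ball (x k) (R k) - ball (x k) r)" for k r
    using emeasure_restrict_measure[OF ball_sets sets.Diff[OF sets.top ball_sets]]
    by (simp add: space Diff_eq Int_commute)
  show "sets (restrict_measure (\<nu> k) (ball (x k) (R k))) = sets borel" for k
    by (simp add: borel)
  show "emeasure (restrict_measure (\<nu> k) (ball (x k) (R k)))
      (space (restrict_measure (\<nu> k) (ball (x k) (R k))) - ball (x k) (R k)) = 0" for k
    by (simp add: restrict_eq)
  fix e :: real assume "e > 0"
  then have "\<alpha> - e / 2 < \<alpha>"
    by simp
  then obtain \<rho> where "\<forall>\<^sub>F k in sequentially. \<alpha> - e / 2 < measure (\<nu> k) (ball (x k) \<rho>)"
    using mass unfolding concentrates_mass_def by blast
  moreover have "\<forall>\<^sub>F k in sequentially. measure (\<nu> k) (ball (x k) (R k)) < \<alpha> + e / 2"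
    using order_tendstoD(2)[OF lim] \<open>e > 0\<close> by simp
  moreover have "\<forall>\<^sub>F k in sequentially. \<rho> \<le> R k"
    using R by (simp add: filterlim_at_top)
  ultimately have "\<forall>\<^sub>F k in sequentially. emeasure (restrict_measure (\<nu> k) (ball (x k) (R k)))
      (space (restrict_measure (\<nu> k) (ball (x k) (R k))) - ball (x k) \<rho>) < ennreal e"
  proof eventually_elim
    case (elim k)
    have "emeasure (\<nu> k) (ball (x k) (R k) - ball (x k) \<rho>)
        = ennreal (measure (\<nu> k) (ball (x k) (R k)) - measure (\<nu> k) (ball (x k) \<rho>))"
      using finite_measure.finite_measure_Diff[OF fin ball_sets ball_sets subset_ball[OF elim(3)]]
      by (simp add: finite_measure.emeasure_eq_measure[OF fin])
    also have "\<dots> < ennreal e"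
      using elim(1,2) \<open>e > 0\<close> by (intro ennreal_lessI) auto
    finally show ?case
      by (simp add: restrict_eq)
  qed
  then show "\<exists>\<rho>. \<forall>\<^sub>F k in sequentially. emeasure (restrict_measure (\<nu> k) (ball (x k) (R k)))
      (space (restrict_measure (\<nu> k) (ball (x k) (R k))) - ball (x k) \<rho>) < ennreal e"
    by (rule exI)
qed

theorem lemma1p3:
  fixes \<mu> :: "nat \<Rightarrow> ('a::metric_space) measure"
    and M \<alpha> :: real and q :: "real \<Rightarrow> real" and t :: "nat \<Rightarrow> real"
  assumes borel: "\<And>n. sets (\<mu> n) = sets borel"
    and M_pos: "M > 0"
    and bounded: "\<And>n. emeasure (\<mu> n) UNIV \<le> ennreal M"
    and q_lim: "AE s in lborel. s > 0 \<longrightarrow> (\<lambda>n. conc_fun (\<mu> n) s) \<longlonglongrightarrow> q s"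
    and q_infty: "(q \<longlongrightarrow> \<alpha>) at_top"
    and alpha_pos: "\<alpha> > 0"
    and t_mono: "incseq t"
    and t_infty: "filterlim t at_top sequentially"
    and t_conc: "(\<lambda>n. conc_fun (\<mu> n) (t n)) \<longlonglongrightarrow> \<alpha>"
  shows "\<exists>r :: nat \<Rightarrow> nat. \<exists>x :: nat \<Rightarrow> 'a. \<exists>R :: nat \<Rightarrow> real.
           strict_mono r \<and>
           (\<forall>k. 0 < R k \<and> R k \<le> t (r k)) \<and>
           filterlim R at_top sequentially \<and>
           (\<lambda>k. measure (\<mu> (r k)) (ball (x k) (R k))) \<longlonglongrightarrow> \<alpha> \<and>
           concentrates_around (\<lambda>k. restrict_measure (\<mu> (r k)) (ball (x k) (R k))) x"
proof -
  have space: "space (\<mu> n) = UNIV" for n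
    using sets_eq_imp_space_eq[OF borel[of n]] by simp
  have fin: "finite_measure (\<mu> n)" for n
    using bounded[of n] by (intro finite_measureI) (auto simp: space top_unique)
  have total: "measure (\<mu> n) (space (\<mu> n)) \<le> M" for n
    using bounded[of n] M_pos by (simp add: space finite_measure.emeasure_eq_measure[OF fin])
  \<comment> \<open>Taking \<open>R k = t (n k)\<close> works for any \<open>t\<close> tending to infinity.\<close>
  obtain N0 where N0: "\<And>n. n \<ge> N0 \<Longrightarrow> 0 < t n"
    using t_infty unfolding filterlim_at_top_dense eventually_sequentially by blast
  obtain r x where r: "strict_mono r" and mass: "concentrates_mass (\<lambda>k. \<mu> (r k + N0)) x \<alpha>"
  proof (rule subseq_concentrates_mass[of "\<lambda>n. \<mu> (n + N0)" M \<alpha>])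
    fix c assume "c < \<alpha>"
    then obtain s where "s > 0" "\<forall>\<^sub>F n in sequentially. c < conc_fun (\<mu> n) s"
      using ex_scale_eventually_less[OF q_lim q_infty] by blast
    then show "\<exists>s. \<forall>\<^sub>F n in sequentially. c < conc_fun (\<mu> (n + N0)) s"
      using eventually_sequentially_seg[of "\<lambda>n. c < conc_fun (\<mu> n) s" N0] by auto
  qed (use borel fin total alpha_pos in auto)
  define n where "n k = r k + N0" for k
  have n: "strict_mono n"
    using r unfolding n_def strict_mono_def by simp
  have R_lim: "filterlim (\<lambda>k. t (n k)) at_top sequentially"
    by (rule filterlim_compose[OF t_infty filterlim_subseq[OF n]])
  have conc: "(\<lambda>k. conc_fun (\<mu> (n k)) (t (n k))) \<longlonglongrightarrow> \<alpha>"
    using LIMSEQ_subseq_LIMSEQ[OF t_conc n] by (simp add: o_def)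
  have mass: "concentrates_mass (\<lambda>k. \<mu> (n k)) x \<alpha>"
    using mass by (simp add: n_def)
  note ball_lim = tendsto_measure_ball_if_concentrates_mass[OF borel fin mass R_lim conc]
  show ?thesis
  proof (intro exI conjI allI)
    show "0 < t (n k)" for k
      using N0 by (simp add: n_def)
  qed (use n R_lim ball_lim concentrates_around_restrict_ball[OF borel fin mass R_lim ball_lim] in auto)
qed

end
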